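(* Let $m_1,m_2,m_3>0$, let $\alpha_{ij},\beta_{ij}>0$ for $1\le i<j\le 3$, and let $a,b\in\mathbb{R}$ with $4<a<b-1$. Consider the Hamiltonian system $\dot{\mathbf q}=M^{-1}\mathbf p$, $\dot{\mathbf p}=-\nabla W(\mathbf q)$ on $(\mathbb{R}^3\setminus\Delta)\times\mathbb{R}^3$. Then no solution of this system has a singularity. That is, if $(\mathbf q(t),\mathbf p(t))$ is a solution with initial data in $(\mathbb{R}^3\setminus\Delta)\times\mathbb{R}^3$, defined on a maximal interval $[0,t^* )$, then $t^*=\infty$. In particular, no double or triple collisions occur in finite time. The analogous statement holds for backward time.
   Context: Three point masses $m_1,m_2,m_3$ move on a line with positions $\mathbf q=(q_1,q_2,q_3)$ and momenta $\mathbf p=(p_1,p_2,p_3)$. Let $M=\mathrm{diag}(m_1,m_2,m_3)$. The Hamiltonian is $H(\mathbf q,\mathbf p)=\tfrac12\mathbf p^TM^{-1}\mathbf p+W(\mathbf q)$, where $W=-U+V$ with $$U(\mathbf q)=\sum_{1\le i<j\le3}\frac{\alpha_{ij}}{|q_i-q_j|^{a}},\qquad V(\mathbf q)=\sum_{1\le i<j\le3}\frac{\beta_{ij}}{|q_i-q_j|^{b}}.$$ The collision set is $\Delta=\{\mathbf q\in\mathbb{R}^3: q_1=q_2\text{ or }q_2=q_3\text{ or }q_1=q_3\}$. *)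

theory Defs
  imports "HOL-Analysis.Analysis"
begin

definition pair_pot :: "real \<Rightarrow> real \<Rightarrow> real \<Rightarrow> real \<Rightarrow> real^3 \<Rightarrow> real" where
  "pair_pot c12 c13 c23 e q =
     c12 / \<bar>q$1 - q$2\<bar> powr e + c13 / \<bar>q$1 - q$3\<bar> powr e + c23 / \<bar>q$2 - q$3\<bar> powr e"

definition Wpot :: "real \<Rightarrow> real \<Rightarrow> real \<Rightarrow> real \<Rightarrow> real \<Rightarrow> real \<Rightarrow> real \<Rightarrow> real \<Rightarrow> real^3 \<Rightarrow> real" where
  "Wpot a12 a13 a23 b12 b13 b23 a b q = - pair_pot a12 a13 a23 a q + pair_pot b12 b13 b23 b q"

definition collision_set :: "(real^3) set" where
  "collision_set = {q. q$1 = q$2 \<or> q$2 = q$3 \<or> q$1 = q$3}"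

text \<open>Gradient of a real function on real^3 at x (well defined where the function is differentiable).\<close>
definition grad :: "(real^3 \<Rightarrow> real) \<Rightarrow> real^3 \<Rightarrow> real^3" where
  "grad f x = (THE D. GDERIV f x :> D)"

definition is_solution ::
  "real^3 \<Rightarrow> (real^3 \<Rightarrow> real) \<Rightarrow> real set \<Rightarrow> (real \<Rightarrow> real^3) \<Rightarrow> (real \<Rightarrow> real^3) \<Rightarrow> bool" where
  "is_solution m W I q p \<longleftrightarrow>
     (\<forall>t\<in>I. q t \<notin> collision_set \<and>
        (q has_vector_derivative (\<chi> i. p t $ i / m $ i)) (at t within I) \<and>
        (p has_vector_derivative (- grad W (q t))) (at t within I))"

end

theory Submission
  imports Defs
begin

text \<open>
  Idea: the total energy \<open>K(p) + W(q)\<close> is conserved. Each pair term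
  \<open>-\<alpha>/r\<^sup>a + \<beta>/r\<^sup>b\<close> is bounded below and tends to \<open>+\<infinity>\<close> as \<open>r \<rightarrow> 0\<close>, so along a solution of
  energy \<open>E\<close> all mutual distances stay above some \<open>\<delta> > 0\<close> and the kinetic energy stays bounded.
  On the region where all distances are at least \<open>\<delta>/2\<close> the force is bounded and Lipschitz,
  hence the first-order Hamiltonian field is bounded along the solution and Lipschitz on a
  neighbourhood of it, and a standard continuation argument extends the solution past any
  finite time.
\<close>

text \<open>The integration bound is
  clamped to the interval so that the operator acts on bounded continuous functions on the
  whole real line.\<close>
definition picard_map :: "('a::banach \<Rightarrow> 'a) \<Rightarrow> 'a \<Rightarrow> real \<Rightarrow> real \<Rightarrow> (real \<Rightarrow> 'a) \<Rightarrow> real \<Rightarrow> 'a" where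
  "picard_map g x0 t0 h y t = x0 + integral {t0..max t0 (min (t0+h) t)} (\<lambda>s. g (y s))"

lemma picard_map_bcontfun:
  fixes g :: "'a::banach \<Rightarrow> 'a"
  assumes g_cont: "continuous_on UNIV g" and bnd: "\<And>x. norm (g x) \<le> B" and h: "0 < h"
  shows "picard_map g x0 t0 h (apply_bcontfun y) \<in> bcontfun"
proof -
  define clamp where "clamp t = max t0 (min (t0+h) t)" for t
  have clamp_in: "clamp t \<in> {t0..t0+h}" for t using h by (auto simp: clamp_def)
  have gy_cont: "continuous_on {t0..t0+h} (\<lambda>s. g (apply_bcontfun y s))"
    by (intro continuous_on_compose2[OF g_cont]) auto
  have clamp_cont: "continuous_on UNIV clamp" unfolding clamp_def by (intro continuous_intros)
  have "continuous_on {t0..t0+h} (\<lambda>u. integral {t0..u} (\<lambda>s. g (apply_bcontfun y s)))"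
    by (intro indefinite_integral_continuous_1 integrable_continuous_real gy_cont)
  then have "continuous_on UNIV (\<lambda>t. x0 + integral {t0..clamp t} (\<lambda>s. g (apply_bcontfun y s)))"
    by (intro continuous_intros continuous_on_compose2[OF _ clamp_cont]) (use clamp_in in auto)
  then have "continuous_on UNIV (picard_map g x0 t0 h (apply_bcontfun y))"
    unfolding picard_map_def clamp_def .
  moreover have "norm (picard_map g x0 t0 h (apply_bcontfun y) t) \<le> norm x0 + B * h" for t
  proof -
    have B0: "0 \<le> B" using bnd[of x0] norm_ge_zero order_trans by blast
    have "norm (integral {t0..clamp t} (\<lambda>s. g (apply_bcontfun y s))) \<le> B * (clamp t - t0)"
      using clamp_in[of t] by (intro integral_bound continuous_on_subset[OF gy_cont] bnd) auto
    also have "\<dots> \<le> B * h" using clamp_in[of t] B0 by (intro mult_left_mono) auto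
    finally show ?thesis unfolding picard_map_def clamp_def[symmetric]
      using norm_triangle_ineq[of x0 "integral {t0..clamp t} (\<lambda>s. g (apply_bcontfun y s))"]
      by linarith
  qed
  then have "bounded (range (picard_map g x0 t0 h (apply_bcontfun y)))" by (auto simp: bounded_iff)
  ultimately show ?thesis by (simp add: bcontfun_def)
qed

lemma picard_map_contraction:
  fixes g :: "'a::banach \<Rightarrow> 'a"
  assumes lip: "L-lipschitz_on UNIV g" and h: "0 < h"
  shows "dist (picard_map g x0 t0 h (apply_bcontfun y) t) (picard_map g x0 t0 h (apply_bcontfun z) t)
    \<le> h * L * dist y z"
proof -
  define t' where "t' = max t0 (min (t0+h) t)"
  have t': "t' \<in> {t0..t0+h}" using h by (auto simp: t'_def)
  have L0: "0 \<le> L" using lip by (rule lipschitz_on_nonneg)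
  have cont: "continuous_on {t0..t'} (\<lambda>s. g (apply_bcontfun y s))" for y
    by (intro continuous_on_compose2[OF lipschitz_on_continuous_on[OF lip]]) auto
  have "norm (integral {t0..t'} (\<lambda>s. g (apply_bcontfun y s) - g (apply_bcontfun z s)))
      \<le> (L * dist y z) * (t' - t0)"
  proof (rule integral_bound)
    fix s
    have "norm (g (apply_bcontfun y s) - g (apply_bcontfun z s))
        \<le> L * norm (apply_bcontfun y s - apply_bcontfun z s)"
      using lip by (rule lipschitz_on_normD) auto
    also have "\<dots> \<le> L * dist y z"
      using dist_bounded[of y s z] L0 by (simp add: dist_norm mult_left_mono)
    finally show "norm (g (apply_bcontfun y s) - g (apply_bcontfun z s)) \<le> L * dist y z" .
  qed (use t' cont in \<open>auto intro!: continuous_intros\<close>)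
  also have "\<dots> \<le> (L * dist y z) * h" using t' L0 by (intro mult_left_mono) auto
  finally show ?thesis
    unfolding picard_map_def t'_def[symmetric] using t' cont
    by (simp add: dist_norm algebra_simps integral_diff integrable_continuous_real)
qed

lemma picard_global:
  fixes g :: "'a::banach \<Rightarrow> 'a"
  assumes lip: "L-lipschitz_on UNIV g" and bnd: "\<And>x. norm (g x) \<le> B"
    and h: "0 < h" "h * L < 1"
  shows "\<exists>y. continuous_on {t0..t0+h} y \<and>
     (\<forall>t\<in>{t0..t0+h}. y t = x0 + integral {t0..t} (\<lambda>s. g (y s)))"
proof -
  define \<Phi> where "\<Phi> y = Bcontfun (picard_map g x0 t0 h (apply_bcontfun y))" for y
  have \<Phi>_apply: "apply_bcontfun (\<Phi> y) = picard_map g x0 t0 h (apply_bcontfun y)" for y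
    using picard_map_bcontfun[OF lipschitz_on_continuous_on[OF lip] bnd h(1)]
    by (simp add: \<Phi>_def Bcontfun_inverse)
  have "dist (\<Phi> y) (\<Phi> z) \<le> (h * L) * dist y z" for y z
    using picard_map_contraction[OF lip h(1)] by (intro dist_bound) (simp add: \<Phi>_apply)
  then obtain y where y: "\<Phi> y = y"
    using banach_fix_type[of "h * L" \<Phi>] h lipschitz_on_nonneg[OF lip] by auto
  have "apply_bcontfun y t = x0 + integral {t0..t} (\<lambda>s. g (apply_bcontfun y s))"
    if "t \<in> {t0..t0+h}" for t
    using fun_cong[OF \<Phi>_apply[of y], of t] that by (simp add: y picard_map_def)
  then show ?thesis by (intro exI[of _ "apply_bcontfun y"]) auto
qed

lemma lipschitz_on_cball_bound:
  fixes f :: "'a::real_normed_vector \<Rightarrow> 'b::real_normed_vector"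
  assumes lip: "L-lipschitz_on (cball x0 r) f" and x: "x \<in> cball x0 r"
  shows "norm (f x) \<le> norm (f x0) + L * r"
proof -
  have "0 \<le> r" using x by (auto intro: order_trans[OF zero_le_dist])
  then have "norm (f x - f x0) \<le> L * norm (x - x0)"
    using lip x by (intro lipschitz_on_normD) auto
  also have "\<dots> \<le> L * r"
    using x lipschitz_on_nonneg[OF lip] by (intro mult_left_mono) (auto simp: dist_norm norm_minus_commute)
  finally show ?thesis using norm_triangle_ineq2[of "f x" "f x0"] by linarith
qed

lemma lipschitz_extension_closest_point:
  fixes f :: "'a::euclidean_space \<Rightarrow> 'b::real_normed_vector"
  assumes r: "0 \<le> r" and lip: "L-lipschitz_on (cball x0 r) f"
  shows "L-lipschitz_on UNIV (\<lambda>x. f (closest_point (cball x0 r) x))"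
proof -
  have "1-lipschitz_on UNIV (closest_point (cball x0 r))"
    using closest_point_lipschitz[of "cball x0 r"] r by (intro lipschitz_onI) auto
  moreover have "range (closest_point (cball x0 r)) \<subseteq> cball x0 r"
    using r by (auto intro!: closest_point_in_set)
  then have "L-lipschitz_on (range (closest_point (cball x0 r))) f"
    by (rule lipschitz_on_subset[OF lip])
  ultimately show ?thesis using lipschitz_on_compose2 by fastforce
qed

text \<open>Choice of the step length: short enough for contraction and for staying in the ball.\<close>
lemma short_step_exists:
  fixes L B r :: real
  assumes "0 \<le> L" "0 \<le> B" "0 < r"
  shows "\<exists>h>0. h * L < 1 \<and> h * B \<le> r"
proof (intro exI conjI)
  let ?h = "min (1 / (2 * (L + 1))) (r / (B + 1))"
  show "0 < ?h" using assms by simp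
  have "?h * L \<le> (1 / (2 * (L + 1))) * L" using assms by (intro mult_right_mono) auto
  also have "\<dots> < 1" using assms by (simp add: field_simps)
  finally show "?h * L < 1" .
  have "?h * B \<le> (r / (B + 1)) * B" using assms by (intro mult_right_mono) auto
  also have "\<dots> \<le> r" using assms by (simp add: field_simps)
  finally show "?h * B \<le> r" .
qed

lemma local_integral_solution:
  fixes f :: "'a::euclidean_space \<Rightarrow> 'a" and T :: real
  assumes r: "0 < r" and lip: "L-lipschitz_on (cball x0 r) f"
  shows "\<exists>h>0. \<exists>y. continuous_on {T..T+h} y \<and>
     (\<forall>t\<in>{T..T+h}. y t \<in> cball x0 r \<and> y t = x0 + integral {T..t} (\<lambda>u. f (y u)))"
proof -
  define cp where "cp = closest_point (cball x0 r)"
  define B where "B = norm (f x0) + L * r"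
  have cp_in: "cp x \<in> cball x0 r" for x unfolding cp_def using r by (intro closest_point_in_set) auto
  have g_lip: "L-lipschitz_on UNIV (\<lambda>x. f (cp x))"
    unfolding cp_def using r lip by (intro lipschitz_extension_closest_point) auto
  have g_bound: "norm (f (cp x)) \<le> B" for x
    unfolding B_def by (rule lipschitz_on_cball_bound[OF lip cp_in])
  have "0 \<le> B" using g_bound[of x0] norm_ge_zero order_trans by blast
  then obtain h where h: "0 < h" "h * L < 1" "h * B \<le> r"
    using short_step_exists lipschitz_on_nonneg[OF lip] r by blast
  obtain y where y_cont: "continuous_on {T..T+h} y"
    and y_eq: "\<forall>t\<in>{T..T+h}. y t = x0 + integral {T..t} (\<lambda>u. f (cp (y u)))"
    using picard_global[OF g_lip g_bound h(1,2)] by blast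
  have y_in: "y t \<in> cball x0 r" if t: "t \<in> {T..T+h}" for t
  proof -
    have "continuous_on {T..t} (\<lambda>u. f (cp (y u)))" using t
      by (intro continuous_on_compose2[OF lipschitz_on_continuous_on[OF g_lip]]
          continuous_on_subset[OF y_cont]) auto
    then have "norm (integral {T..t} (\<lambda>u. f (cp (y u)))) \<le> B * (t - T)"
      using t by (intro integral_bound g_bound) auto
    also have "\<dots> \<le> h * B" using t \<open>0 \<le> B\<close> by (simp add: mult.commute mult_left_mono)
    finally show ?thesis using y_eq t h(3) by (simp add: dist_norm norm_minus_commute)
  qed
  text \<open>Inside the ball the projection is the identity, so \<open>y\<close> solves the original equation.\<close>
  have "integral {T..t} (\<lambda>u. f (cp (y u))) = integral {T..t} (\<lambda>u. f (y u))" if "t \<in> {T..T+h}" for t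
    using that y_in by (intro integral_cong) (simp add: cp_def closest_point_self)
  then have "y t = x0 + integral {T..t} (\<lambda>u. f (y u))" if "t \<in> {T..T+h}" for t
    using y_eq that by simp
  then show ?thesis using h(1) y_cont y_in by blast
qed

text \<open>A curve with bounded velocity on \<open>[0, T)\<close> is Lipschitz, hence extends continuously to
  \<open>[0, T]\<close>; the extension stays in any closed set containing the curve.\<close>
lemma bounded_velocity_extends_to_endpoint:
  fixes s :: "real \<Rightarrow> 'a::banach"
  assumes T: "0 < T"
    and deriv: "\<And>t. t \<in> {0..<T} \<Longrightarrow> (s has_vector_derivative v t) (at t within {0..<T})"
    and bound: "\<And>t. t \<in> {0..<T} \<Longrightarrow> norm (v t) \<le> B"
    and S: "closed S" "\<And>t. t \<in> {0..<T} \<Longrightarrow> s t \<in> S"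
  obtains g where "continuous_on {0..T} g" "\<And>t. t \<in> {0..<T} \<Longrightarrow> g t = s t"
    "\<And>t. t \<in> {0..T} \<Longrightarrow> g t \<in> S"
proof -
  have "norm (v 0) \<le> B" using bound T by simp
  then have B0: "0 \<le> B" using norm_ge_zero order_trans by blast
  have "B-lipschitz_on {0..<T} s"
  proof (rule bounded_derivative_imp_lipschitz)
    fix t assume "t \<in> {0..<T}"
    then show "(s has_derivative (\<lambda>h. h *\<^sub>R v t)) (at t within {0..<T})"
      using deriv by (simp add: has_vector_derivative_def)
    show "onorm (\<lambda>h. h *\<^sub>R v t) \<le> B"
      using bound[OF \<open>t \<in> {0..<T}\<close>] by (simp add: onorm_scaleR_left onorm_id)
  qed (use B0 in auto)
  then have "uniformly_continuous_on {0..<T} s" by (rule lipschitz_on_uniformly_continuous)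
  then obtain g where g: "uniformly_continuous_on {0..T} g" "\<And>t. t \<in> {0..<T} \<Longrightarrow> s t = g t"
    using uniformly_continuous_on_extension_on_closure T by (metis closure_atLeastLessThan)
  then have g_cont: "continuous_on {0..T} g" using uniformly_continuous_imp_continuous by blast
  have "g ` {0..<T} \<subseteq> S" using g(2) S(2) by auto
  then have "g ` closure {0..<T} \<subseteq> S"
    using T g_cont by (intro image_closure_subset[OF _ S(1)]) auto
  then have g_in: "g ` {0..T} \<subseteq> S" using T by simp
  show ?thesis
  proof (rule that[OF g_cont])
    show "g t = s t" if "t \<in> {0..<T}" for t using g(2)[OF that] by simp
    show "g t \<in> S" if "t \<in> {0..T}" for t using g_in that by blast
  qed
qed

lemma integral_equation_at_endpoint:
  fixes g :: "real \<Rightarrow> 'a::banach"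
  assumes T: "0 < T" and g_cont: "continuous_on {0..T} g"
    and fg_cont: "continuous_on {0..T} (\<lambda>t. f (g t))"
    and deriv: "\<And>t. t \<in> {0..<T} \<Longrightarrow> (g has_vector_derivative f (g t)) (at t within {0..<T})"
    and t: "t \<in> {0..T}"
  shows "g t = g 0 + integral {0..t} (\<lambda>u. f (g u))"
proof -
  define err where "err t = g t - (g 0 + integral {0..t} (\<lambda>u. f (g u)))" for t
  text \<open>On the half-open interval this is the fundamental theorem of calculus;
    the endpoint follows by continuity.\<close>
  have "err u = 0" if u: "u \<in> {0..<T}" for u
  proof -
    have "((\<lambda>u. f (g u)) has_integral (g u - g 0)) {0..u}"
    proof (rule fundamental_theorem_of_calculus)
      fix x assume "x \<in> {0..u}"
      then show "(g has_vector_derivative f (g x)) (at x within {0..u})"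
        using u by (intro has_vector_derivative_within_subset[OF deriv]) auto
    qed (use u in auto)
    then show ?thesis by (simp add: err_def integral_unique)
  qed
  then have zero: "err ` {0..<T} \<subseteq> {0}" by auto
  have cont: "continuous_on (closure {0..<T}) err"
    unfolding err_def using T
    by (auto intro!: continuous_intros g_cont indefinite_integral_continuous_1
        integrable_continuous_real fg_cont)
  have "err ` closure {0..<T} \<subseteq> {0}" using image_closure_subset[OF cont closed_singleton zero] .
  then have "err t = 0" using t T by (auto simp: image_subset_iff)
  then show ?thesis by (simp add: err_def)
qed

lemma integral_solution_concat:
  fixes g y :: "real \<Rightarrow> 'a::banach"
  assumes abc: "a \<le> b" "b \<le> c"
    and g: "continuous_on {a..b} (\<lambda>t. f (g t))" "\<And>t. t \<in> {a..b} \<Longrightarrow> g t = g a + integral {a..t} (\<lambda>u. f (g u))"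
    and y: "continuous_on {b..c} (\<lambda>t. f (y t))" "\<And>t. t \<in> {b..c} \<Longrightarrow> y t = g b + integral {b..t} (\<lambda>u. f (y u))"
    and t: "t \<in> {a..c}"
  shows "((\<lambda>t. if t \<le> b then g t else y t) has_vector_derivative
     f (if t \<le> b then g t else y t)) (at t within {a..c})"
proof -
  define z where "z t = (if t \<le> b then g t else y t)" for t
  have yb: "y b = g b" using y(2)[of b] abc by simp
  have "continuous_on {a..c} (\<lambda>t. if t \<le> b then f (g t) else f (y t))"
  proof (rule continuous_on_cases_le)
    show "continuous_on {t \<in> {a..c}. t \<le> b} (\<lambda>t. f (g t))"
      by (rule continuous_on_subset[OF g(1)]) auto
    show "continuous_on {t \<in> {a..c}. b \<le> t} (\<lambda>t. f (y t))"
      by (rule continuous_on_subset[OF y(1)]) auto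
  qed (use yb in \<open>auto intro: continuous_on_id\<close>)
  then have fz_cont: "continuous_on {a..c} (\<lambda>t. f (z t))"
    by (simp add: z_def if_distrib)
  have fz_int: "(\<lambda>u. f (z u)) integrable_on {a..t}" if "t \<in> {a..c}" for t
    using that by (intro integrable_continuous_real continuous_on_subset[OF fz_cont]) auto
  have z_eq: "z t = g a + integral {a..t} (\<lambda>u. f (z u))" if t: "t \<in> {a..c}" for t
  proof (cases "t \<le> b")
    case True
    then show ?thesis using t g(2)[of t] by (auto simp: z_def intro!: integral_cong)
  next
    case False
    have "integral {a..t} (\<lambda>u. f (z u)) = integral {a..b} (\<lambda>u. f (z u)) + integral {b..t} (\<lambda>u. f (z u))"
      using False abc fz_int[OF t] by (intro Henstock_Kurzweil_Integration.integral_combine[symmetric]) auto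
    also have "integral {a..b} (\<lambda>u. f (z u)) = integral {a..b} (\<lambda>u. f (g u))"
      by (intro integral_cong) (simp add: z_def)
    also have "integral {b..t} (\<lambda>u. f (z u)) = integral {b..t} (\<lambda>u. f (y u))"
      using yb by (intro integral_cong) (auto simp: z_def)
    finally show ?thesis using False t abc g(2)[of b] y(2)[of t] by (simp add: z_def)
  qed
  have D: "((\<lambda>t. g a + integral {a..t} (\<lambda>u. f (z u))) has_vector_derivative f (z t)) (at t within {a..c})"
    using has_vector_derivative_add[OF has_vector_derivative_const
        integral_has_vector_derivative[OF fz_cont t]] by simp
  have "(z has_vector_derivative f (z t)) (at t within {a..c})"
    using has_vector_derivative_transform[of t "{a..c}" z _ "f (z t)", OF t z_eq D] .
  then show ?thesis by (simp add: z_def[abs_def])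
qed

lemma integral_solution_to_endpoint:
  fixes f :: "'a::banach \<Rightarrow> 'a" and s :: "real \<Rightarrow> 'a"
  assumes T: "0 < T" and S: "closed S" and f_cont: "continuous_on S f"
    and s_in: "\<And>t. t \<in> {0..<T} \<Longrightarrow> s t \<in> S"
    and s_deriv: "\<And>t. t \<in> {0..<T} \<Longrightarrow> (s has_vector_derivative f (s t)) (at t within {0..<T})"
    and bound: "\<And>t. t \<in> {0..<T} \<Longrightarrow> norm (f (s t)) \<le> B"
  obtains g where "\<And>t. t \<in> {0..<T} \<Longrightarrow> g t = s t" "\<And>t. t \<in> {0..T} \<Longrightarrow> g t \<in> S"
    "continuous_on {0..T} (\<lambda>t. f (g t))"
    "\<And>t. t \<in> {0..T} \<Longrightarrow> g t = g 0 + integral {0..t} (\<lambda>u. f (g u))"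
proof -
  obtain g where g_cont: "continuous_on {0..T} g" and g_s: "\<And>t. t \<in> {0..<T} \<Longrightarrow> g t = s t"
    and g_S: "\<And>t. t \<in> {0..T} \<Longrightarrow> g t \<in> S"
    using bounded_velocity_extends_to_endpoint[OF T s_deriv bound S s_in] by blast
  have fg_cont: "continuous_on {0..T} (\<lambda>t. f (g t))"
    using g_S by (intro continuous_on_compose2[OF f_cont g_cont]) auto
  have "(g has_vector_derivative f (g t)) (at t within {0..<T})" if t: "t \<in> {0..<T}" for t
    using has_vector_derivative_transform[of t "{0..<T}" g s, OF t g_s s_deriv[OF t]] g_s[OF t]
    by simp
  then have "g t = g 0 + integral {0..t} (\<lambda>u. f (g u))" if "t \<in> {0..T}" for t
    using integral_equation_at_endpoint[OF T g_cont fg_cont _ that] by blast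
  then show ?thesis using that g_s g_S fg_cont by blast
qed

lemma ode_continuation:
  fixes f :: "'a::euclidean_space \<Rightarrow> 'a" and s :: "real \<Rightarrow> 'a"
  assumes T: "0 < T" and S: "closed S" and r: "0 < r"
    and lip: "L-lipschitz_on (\<Union>x\<in>S. cball x r) f"
    and s_in: "\<And>t. t \<in> {0..<T} \<Longrightarrow> s t \<in> S"
    and s_deriv: "\<And>t. t \<in> {0..<T} \<Longrightarrow> (s has_vector_derivative f (s t)) (at t within {0..<T})"
    and bound: "\<And>t. t \<in> {0..<T} \<Longrightarrow> norm (f (s t)) \<le> B"
  shows "\<exists>T'>T. \<exists>z. (\<forall>t\<in>{0..<T}. z t = s t) \<and>
    (\<forall>t\<in>{0..<T'}. z t \<in> (\<Union>x\<in>S. cball x r) \<and>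
       (z has_vector_derivative f (z t)) (at t within {0..<T'}))"
proof -
  define N where "N = (\<Union>x\<in>S. cball x r)"
  have f_cont: "continuous_on N f" using lip unfolding N_def by (rule lipschitz_on_continuous_on)
  have ball_N: "cball x r \<subseteq> N" if "x \<in> S" for x using that unfolding N_def by blast
  have S_N: "S \<subseteq> N" using ball_N r by force
  obtain g where g_s: "\<And>t. t \<in> {0..<T} \<Longrightarrow> g t = s t" and g_S: "\<And>t. t \<in> {0..T} \<Longrightarrow> g t \<in> S"
    and fg_cont: "continuous_on {0..T} (\<lambda>t. f (g t))"
    and g_int: "\<And>t. t \<in> {0..T} \<Longrightarrow> g t = g 0 + integral {0..t} (\<lambda>u. f (g u))"
    using integral_solution_to_endpoint[OF T S continuous_on_subset[OF f_cont S_N] s_in s_deriv bound]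
    by blast
  have gT: "g T \<in> S" using g_S T by simp
  text \<open>Restart at the endpoint with a local solution inside the ball of radius \<open>r\<close>.\<close>
  have "L-lipschitz_on (cball (g T) r) f" using lip ball_N[OF gT] unfolding N_def
    by (rule lipschitz_on_subset)
  then obtain h y where h: "0 < h" and y_cont: "continuous_on {T..T+h} y"
    and y: "\<forall>t\<in>{T..T+h}. y t \<in> cball (g T) r \<and> y t = g T + integral {T..t} (\<lambda>u. f (y u))"
    using local_integral_solution[OF r] by blast
  have y_N: "y t \<in> N" if "t \<in> {T..T+h}" for t using y that ball_N[OF gT] by blast
  have fy_cont: "continuous_on {T..T+h} (\<lambda>t. f (y t))"
    using y_N by (intro continuous_on_compose2[OF f_cont y_cont]) auto
  define z where "z t = (if t \<le> T then g t else y t)" for t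
  have z_deriv: "(z has_vector_derivative f (z t)) (at t within {0..<T+h})" if t: "t \<in> {0..<T+h}" for t
  proof (rule has_vector_derivative_within_subset)
    show "(z has_vector_derivative f (z t)) (at t within {0..T+h})"
      unfolding z_def[abs_def]
    proof (rule integral_solution_concat[where f = f and a = 0 and b = T and c = "T+h" and g = g and y = y])
      show "g u = g 0 + integral {0..u} (\<lambda>u. f (g u))" if "u \<in> {0..T}" for u
        using that by (rule g_int)
      show "y u = g T + integral {T..u} (\<lambda>u. f (y u))" if "u \<in> {T..T+h}" for u
        using y that by blast
    qed (use T h t fg_cont fy_cont in auto)
  qed auto
  have z_N: "z t \<in> N" if t: "t \<in> {0..<T+h}" for t
    using S_N g_S y_N t by (cases "t \<le> T") (auto simp: z_def)
  have "\<forall>t\<in>{0..<T}. z t = s t" using g_s by (simp add: z_def)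
  then show ?thesis
    using h z_deriv z_N unfolding N_def by (intro exI[of _ "T+h"] conjI exI[of _ z]) auto
qed

text \<open>\<open>signed_inv_powr e d = sgn d / |d|^(e+1)\<close>; the derivative of \<open>|d|^(-e)\<close> is \<open>-e\<close> times it.\<close>
definition signed_inv_powr :: "real \<Rightarrow> real \<Rightarrow> real" where
  "signed_inv_powr e d = sgn d * \<bar>d\<bar> powr (-(e+1))"

lemma has_real_derivative_inv_abs_powr:
  assumes "d \<noteq> 0"
  shows "((\<lambda>x. c / \<bar>x\<bar> powr e) has_real_derivative - (e * c) * signed_inv_powr e d) (at d)"
proof (cases "d > 0")
  case True
  have "eventually (\<lambda>x. x > 0) (nhds d)" by (rule order_tendstoD(1)[OF filterlim_ident True])
  then have ev: "eventually (\<lambda>x. c * x powr (-e) = c / \<bar>x\<bar> powr e) (nhds d)"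
    by eventually_elim (simp add: powr_minus_divide)
  have D: "((\<lambda>x. c * x powr (-e)) has_real_derivative c * (-e * d powr (-e - 1))) (at d)"
    by (intro DERIV_cmult has_real_derivative_powr True)
  have "c * (-e * d powr (-e - 1)) = - (e * c) * signed_inv_powr e d"
    using True by (simp add: signed_inv_powr_def)
  from DERIV_cong_ev[OF refl ev this] D show ?thesis by simp
next
  case False
  then have neg: "d < 0" using assms by simp
  have "eventually (\<lambda>x. x < 0) (nhds d)" by (rule order_tendstoD(2)[OF filterlim_ident neg])
  then have ev: "eventually (\<lambda>x. c * (-x) powr (-e) = c / \<bar>x\<bar> powr e) (nhds d)"
    by eventually_elim (simp add: powr_minus_divide)
  have D: "((\<lambda>x. c * (-x) powr (-e)) has_real_derivative c * ((-e * (-d) powr (-e - 1)) * (-1))) (at d)"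
    using neg by (intro DERIV_cmult DERIV_chain2[OF has_real_derivative_powr])
      (auto intro!: derivative_eq_intros)
  have "c * ((-e * (-d) powr (-e - 1)) * (-1)) = - (e * c) * signed_inv_powr e d"
    using neg by (simp add: signed_inv_powr_def)
  from DERIV_cong_ev[OF refl ev this] D show ?thesis by simp
qed

definition pair_term :: "real \<Rightarrow> real \<Rightarrow> 3 \<Rightarrow> 3 \<Rightarrow> real^3 \<Rightarrow> real^3" where
  "pair_term c e i j q = (- (e * c) * signed_inv_powr e (q$i - q$j)) *\<^sub>R (axis i 1 - axis j 1)"

definition pair_pot_grad :: "real \<Rightarrow> real \<Rightarrow> real \<Rightarrow> real \<Rightarrow> real^3 \<Rightarrow> real^3" where
  "pair_pot_grad c12 c13 c23 e q = pair_term c12 e 1 2 q + pair_term c13 e 1 3 q + pair_term c23 e 2 3 q"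

definition Wpot_grad ::
  "real \<Rightarrow> real \<Rightarrow> real \<Rightarrow> real \<Rightarrow> real \<Rightarrow> real \<Rightarrow> real \<Rightarrow> real \<Rightarrow> real^3 \<Rightarrow> real^3" where
  "Wpot_grad a12 a13 a23 b12 b13 b23 a b q =
     - pair_pot_grad a12 a13 a23 a q + pair_pot_grad b12 b13 b23 b q"

lemma gderiv_pair_term:
  assumes "q$i \<noteq> q$j"
  shows "GDERIV (\<lambda>q::real^3. c / \<bar>q$i - q$j\<bar> powr e) q :> pair_term c e i j q"
proof -
  have coord: "GDERIV (\<lambda>q::real^3. q$k) q :> axis k 1" for k
    unfolding gderiv_def
    by (rule has_derivative_eq_rhs[OF bounded_linear.has_derivative[OF bounded_linear_vec_nth]])
       (auto simp: inner_axis)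
  show ?thesis
    using GDERIV_DERIV_compose[OF GDERIV_diff[OF coord coord] has_real_derivative_inv_abs_powr]
      assms by (simp add: pair_term_def)
qed

lemma gderiv_Wpot:
  assumes "q \<notin> collision_set"
  shows "GDERIV (Wpot a12 a13 a23 b12 b13 b23 a b) q :> Wpot_grad a12 a13 a23 b12 b13 b23 a b q"
proof -
  have "q$1 \<noteq> q$2" "q$1 \<noteq> q$3" "q$2 \<noteq> q$3" using assms by (auto simp: collision_set_def)
  then have "GDERIV (pair_pot c12 c13 c23 e) q :> pair_pot_grad c12 c13 c23 e q" for c12 c13 c23 e
    unfolding pair_pot_def[abs_def] pair_pot_grad_def by (intro GDERIV_add gderiv_pair_term)
  then show ?thesis
    unfolding Wpot_def[abs_def] Wpot_grad_def by (intro GDERIV_add GDERIV_minus)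
qed

lemma gderiv_unique:
  assumes "GDERIV f x :> D" "GDERIV f x :> D'"
  shows "D = D'"
proof -
  have "(\<lambda>h. inner h D) = (\<lambda>h. inner h D')"
    using assms unfolding gderiv_def by (rule has_derivative_unique)
  then have "inner (D - D') D = inner (D - D') D'" by metis
  then have "inner (D - D') (D - D') = 0" by (simp add: inner_diff_right)
  then show ?thesis by simp
qed

lemma grad_Wpot:
  assumes "q \<notin> collision_set"
  shows "grad (Wpot a12 a13 a23 b12 b13 b23 a b) q = Wpot_grad a12 a13 a23 b12 b13 b23 a b q"
  unfolding grad_def using gderiv_Wpot[OF assms] gderiv_unique by blast

definition separated :: "real \<Rightarrow> (real^3) set" where
  "separated dl = {q. dl \<le> \<bar>q$1 - q$2\<bar> \<and> dl \<le> \<bar>q$1 - q$3\<bar> \<and> dl \<le> \<bar>q$2 - q$3\<bar>}"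

lemma closed_separated: "closed (separated dl)"
  unfolding separated_def by (intro closed_Collect_conj closed_Collect_le continuous_intros)

lemma separated_not_collision: "0 < dl \<Longrightarrow> q \<in> separated dl \<Longrightarrow> q \<notin> collision_set"
  by (auto simp: separated_def collision_set_def)

lemma separated_perturb:
  assumes "q \<in> separated dl" "norm (q' - q) \<le> dl / 4"
  shows "q' \<in> separated (dl / 2)"
proof -
  have close: "\<bar>q'$i - q$i\<bar> \<le> dl / 4" for i
    using component_le_norm_cart[of "q' - q" i] assms(2) by simp
  have "dl / 2 \<le> \<bar>q'$i - q'$j\<bar>" if "dl \<le> \<bar>q$i - q$j\<bar>" for i j
    using close[of i] close[of j] that by linarith
  then show ?thesis using assms(1) unfolding separated_def by auto
qed

lemma powr_neg_exponent_lipschitz: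
  fixes k x y dl :: real
  assumes "k < 0" "0 < dl" "dl \<le> x" "x \<le> y"
  shows "\<bar>x powr k - y powr k\<bar> \<le> (-k) * dl powr (k - 1) * (y - x)"
proof (cases "x = y")
  case False
  then have xy: "x < y" using assms by simp
  have "\<exists>z>x. z < y \<and> y powr k - x powr k = (y - x) * (k * z powr (k - 1))"
    by (rule MVT2[OF xy]) (use assms in \<open>auto intro!: has_real_derivative_powr\<close>)
  then obtain z where z: "x < z" "z < y" "y powr k - x powr k = (y - x) * (k * z powr (k - 1))"
    by blast
  have "z powr (k - 1) \<le> dl powr (k - 1)" using z assms by (intro powr_mono2') auto
  then have "(y - x) * ((-k) * z powr (k - 1)) \<le> (y - x) * ((-k) * dl powr (k - 1))"
    using xy assms by (intro mult_left_mono) auto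
  moreover have "0 \<le> (y - x) * ((-k) * z powr (k - 1))"
    using xy assms by (intro mult_nonneg_nonneg) auto
  ultimately show ?thesis using z(3) by (simp add: algebra_simps)
qed simp

lemma signed_inv_powr_bound:
  assumes "0 < e" "0 < dl" "dl \<le> \<bar>d\<bar>"
  shows "\<bar>signed_inv_powr e d\<bar> \<le> dl powr (-(e+1))"
proof -
  have "\<bar>d\<bar> powr (-(e+1)) \<le> dl powr (-(e+1))" using assms by (intro powr_mono2') auto
  then show ?thesis unfolding signed_inv_powr_def by (auto simp: abs_mult sgn_if)
qed

text \<open>For arguments of equal sign this
  is the mean value theorem; for arguments of opposite sign both values are small compared
  with the distance of the arguments, which is then at least \<open>2 dl\<close>.\<close>
lemma signed_inv_powr_lipschitz:
  assumes e: "0 < e" and dl: "0 < dl" and d: "dl \<le> \<bar>d\<bar>" and d': "dl \<le> \<bar>d'\<bar>"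
  shows "\<bar>signed_inv_powr e d - signed_inv_powr e d'\<bar> \<le> (e+1) * dl powr (-(e+2)) * \<bar>d - d'\<bar>"
proof -
  have same_sign: "\<bar>x powr (-(e+1)) - y powr (-(e+1))\<bar> \<le> (e+1) * dl powr (-(e+2)) * \<bar>x - y\<bar>"
    if "dl \<le> x" "dl \<le> y" for x y
    using powr_neg_exponent_lipschitz[of "-(e+1)" dl x y] powr_neg_exponent_lipschitz[of "-(e+1)" dl y x]
      that e dl by (cases "x \<le> y") (simp_all add: abs_minus_commute algebra_simps)
  show ?thesis
  proof (cases "(0 < d \<and> 0 < d') \<or> (d < 0 \<and> d' < 0)")
    case True
    then show ?thesis
      using same_sign[of d d'] same_sign[of "-d" "-d'"] d d'
      by (auto simp: signed_inv_powr_def abs_minus_commute)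
  next
    case False
    then have far: "2 * dl \<le> \<bar>d - d'\<bar>" using d d' dl by auto
    have "-(e+2) + 1 = -(e+1)" by simp
    then have "dl powr (-(e+2)) * dl powr 1 = dl powr (-(e+1))" by (metis powr_add)
    then have "dl powr (-(e+2)) * dl = dl powr (-(e+1))" using dl by simp
    moreover have "\<bar>signed_inv_powr e d - signed_inv_powr e d'\<bar> \<le> 2 * dl powr (-(e+1))"
      using signed_inv_powr_bound[OF e dl d] signed_inv_powr_bound[OF e dl d'] by linarith
    moreover have "dl powr (-(e+2)) * (2 * dl) \<le> (e+1) * dl powr (-(e+2)) * \<bar>d - d'\<bar>"
      using far e dl mult_mono[of 1 "e+1" "2 * dl" "\<bar>d - d'\<bar>"]
      by (simp add: mult.assoc mult_left_mono)
    ultimately show ?thesis by (simp add: mult.commute mult.left_commute)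
  qed
qed

lemma pair_term_bound:
  assumes e: "0 < e" and dl: "0 < dl" and c: "0 \<le> c" and q: "dl \<le> \<bar>q$i - q$j\<bar>"
  shows "norm (pair_term c e i j q) \<le> 2 * e * c * dl powr (-(e+1))"
proof -
  have "norm (pair_term c e i j q) = e * c * \<bar>signed_inv_powr e (q$i - q$j)\<bar> * norm (axis i 1 - axis j (1::real) :: real^3)"
    using e c by (simp add: pair_term_def abs_mult)
  also have "\<dots> \<le> e * c * dl powr (-(e+1)) * 2"
    using e c signed_inv_powr_bound[OF e dl q] norm_triangle_ineq4[of "axis i (1::real) :: real^3" "axis j 1"]
    by (intro mult_mono mult_left_mono) auto
  finally show ?thesis by (simp add: algebra_simps)
qed

lemma pair_term_lipschitz:
  assumes e: "0 < e" and dl: "0 < dl" and c: "0 \<le> c"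
  shows "(4 * e * c * ((e+1) * dl powr (-(e+2))))-lipschitz_on {q. dl \<le> \<bar>q$i - q$j\<bar>} (pair_term c e i j)"
proof (rule lipschitz_onI)
  fix q q' :: "real^3" assume "q \<in> {q. dl \<le> \<bar>q$i - q$j\<bar>}" "q' \<in> {q. dl \<le> \<bar>q$i - q$j\<bar>}"
  then have d: "dl \<le> \<bar>q$i - q$j\<bar>" and d': "dl \<le> \<bar>q'$i - q'$j\<bar>" by auto
  let ?K = "(e+1) * dl powr (-(e+2))"
  have coord: "\<bar>(q$i - q$j) - (q'$i - q'$j)\<bar> \<le> 2 * norm (q - q')"
    using component_le_norm_cart[of "q - q'" i] component_le_norm_cart[of "q - q'" j] by simp
  have "norm (pair_term c e i j q - pair_term c e i j q')
      = e * c * \<bar>signed_inv_powr e (q$i - q$j) - signed_inv_powr e (q'$i - q'$j)\<bar>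
        * norm (axis i 1 - axis j (1::real) :: real^3)"
    unfolding pair_term_def scaleR_diff_left[symmetric] norm_scaleR using e c
    by (simp add: abs_mult right_diff_distrib[symmetric] abs_minus_commute)
  also have "\<dots> \<le> e * c * (?K * (2 * norm (q - q'))) * 2"
    using e c signed_inv_powr_lipschitz[OF e dl d d'] coord
      norm_triangle_ineq4[of "axis i (1::real) :: real^3" "axis j 1"]
    by (intro mult_mono mult_left_mono order_trans[OF _ mult_left_mono[OF coord]]) auto
  finally show "dist (pair_term c e i j q) (pair_term c e i j q') \<le> 4 * e * c * ?K * dist q q'"
    by (simp add: dist_norm algebra_simps)
qed (use e c dl in simp)

lemma pair_pot_grad_lipschitz:
  assumes e: "0 < e" and dl: "0 < dl" and c: "0 \<le> c12" "0 \<le> c13" "0 \<le> c23"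
  shows "(4 * e * (c12 + c13 + c23) * ((e+1) * dl powr (-(e+2))))-lipschitz_on
     (separated dl) (pair_pot_grad c12 c13 c23 e)"
proof -
  have "separated dl \<subseteq> {q. dl \<le> \<bar>q$i - q$j\<bar>}" if "(i, j) \<in> {(1, 2), (1, 3), (2, 3)}" for i j
    using that by (auto simp: separated_def)
  then have "(4 * e * c12 * ((e+1) * dl powr (-(e+2))) + 4 * e * c13 * ((e+1) * dl powr (-(e+2)))
      + 4 * e * c23 * ((e+1) * dl powr (-(e+2))))-lipschitz_on (separated dl) (pair_pot_grad c12 c13 c23 e)"
    unfolding pair_pot_grad_def
    by (intro lipschitz_on_add lipschitz_on_subset[OF pair_term_lipschitz[OF e dl]] c) auto
  then show ?thesis by (simp add: algebra_simps)
qed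

lemma pair_pot_grad_bound:
  assumes e: "0 < e" and dl: "0 < dl" and c: "0 \<le> c12" "0 \<le> c13" "0 \<le> c23"
    and q: "q \<in> separated dl"
  shows "norm (pair_pot_grad c12 c13 c23 e q) \<le> 2 * e * (c12 + c13 + c23) * dl powr (-(e+1))"
proof -
  have "norm (pair_pot_grad c12 c13 c23 e q) \<le> 2 * e * c12 * dl powr (-(e+1))
      + 2 * e * c13 * dl powr (-(e+1)) + 2 * e * c23 * dl powr (-(e+1))"
    unfolding pair_pot_grad_def using q
    by (intro norm_triangle_le add_mono pair_term_bound e dl c) (auto simp: separated_def)
  then show ?thesis by (simp add: algebra_simps)
qed

lemma Wpot_grad_lipschitz:
  assumes "0 < a12" "0 < a13" "0 < a23" "0 < b12" "0 < b13" "0 < b23" "0 < a" "a < b" "0 < dl"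
  shows "\<exists>L. L-lipschitz_on (separated dl) (Wpot_grad a12 a13 a23 b12 b13 b23 a b)"
proof -
  let ?La = "4 * a * (a12 + a13 + a23) * ((a+1) * dl powr (-(a+2)))"
  let ?Lb = "4 * b * (b12 + b13 + b23) * ((b+1) * dl powr (-(b+2)))"
  have "(?La + ?Lb)-lipschitz_on (separated dl)
      (\<lambda>q. - pair_pot_grad a12 a13 a23 a q + pair_pot_grad b12 b13 b23 b q)"
    using assms by (intro lipschitz_on_add lipschitz_on_minus pair_pot_grad_lipschitz) auto
  then show ?thesis unfolding Wpot_grad_def[abs_def] by blast
qed

lemma Wpot_grad_bounded:
  assumes "0 < a12" "0 < a13" "0 < a23" "0 < b12" "0 < b13" "0 < b23" "0 < a" "a < b" "0 < dl"
  shows "\<exists>B. \<forall>q\<in>separated dl. norm (Wpot_grad a12 a13 a23 b12 b13 b23 a b q) \<le> B"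
proof (intro exI ballI)
  fix q assume q: "q \<in> separated dl"
  have "norm (Wpot_grad a12 a13 a23 b12 b13 b23 a b q)
      \<le> norm (pair_pot_grad a12 a13 a23 a q) + norm (pair_pot_grad b12 b13 b23 b q)"
    unfolding Wpot_grad_def by (metis norm_minus_cancel norm_triangle_ineq)
  also have "\<dots> \<le> 2 * a * (a12 + a13 + a23) * dl powr (-(a+1)) + 2 * b * (b12 + b13 + b23) * dl powr (-(b+1))"
    using assms q by (intro add_mono pair_pot_grad_bound) auto
  finally show "norm (Wpot_grad a12 a13 a23 b12 b13 b23 a b q)
      \<le> 2 * a * (a12 + a13 + a23) * dl powr (-(a+1)) + 2 * b * (b12 + b13 + b23) * dl powr (-(b+1))" .
qed

definition pair_energy :: "real \<Rightarrow> real \<Rightarrow> real \<Rightarrow> real \<Rightarrow> real \<Rightarrow> real" where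
  "pair_energy al be a b r = - al / r powr a + be / r powr b"

lemma Wpot_pair_energy:
  "Wpot a12 a13 a23 b12 b13 b23 a b q = pair_energy a12 b12 a b \<bar>q$1 - q$2\<bar>
     + pair_energy a13 b13 a b \<bar>q$1 - q$3\<bar> + pair_energy a23 b23 a b \<bar>q$2 - q$3\<bar>"
  unfolding Wpot_def pair_pot_def pair_energy_def by (simp only: minus_divide_left[symmetric])

text \<open>Below the radius \<open>\<rho>\<close> the repulsive term dominates the attractive one (at least twice
  over), and beyond it the pair energy is at least \<open>-al / \<rho>\<^sup>a\<close>.\<close>
lemma pair_energy_near_far:
  assumes ab: "0 < a" "a < b" and al: "0 < al" and be: "0 < be"
  defines "\<rho> \<equiv> (be / (2 * al)) powr (1 / (b - a))"
  shows "0 < \<rho>" and "\<And>r. 0 < r \<Longrightarrow> r \<le> \<rho> \<Longrightarrow> al / r powr a \<le> pair_energy al be a b r"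
    and "\<And>r. \<rho> \<le> r \<Longrightarrow> - (al / \<rho> powr a) \<le> pair_energy al be a b r"
proof -
  show \<rho>: "0 < \<rho>" using al be by (simp add: \<rho>_def)
  fix r :: real
  show "al / r powr a \<le> pair_energy al be a b r" if r: "0 < r" "r \<le> \<rho>"
  proof -
    have "r powr (b - a) \<le> \<rho> powr (b - a)" using r ab by (intro powr_mono2) auto
    also have "\<dots> = be / (2 * al)" using al be ab by (simp add: \<rho>_def powr_powr)
    finally have small: "r powr (b - a) \<le> be / (2 * al)" .
    have "be / r powr b = be / (r powr a * r powr (b - a))" by (simp add: powr_add[symmetric])
    also have "\<dots> \<ge> be / (r powr a * (be / (2 * al)))"
      using r small be al by (intro divide_left_mono mult_left_mono mult_pos_pos) auto
    also have "be / (r powr a * (be / (2 * al))) = 2 * (al / r powr a)"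
      using be al r by (simp add: field_simps)
    finally show ?thesis unfolding pair_energy_def by simp
  qed
  show "- (al / \<rho> powr a) \<le> pair_energy al be a b r" if r: "\<rho> \<le> r"
  proof -
    have "\<rho> powr a \<le> r powr a" using r \<rho> ab by (intro powr_mono2) auto
    then have "al / r powr a \<le> al / \<rho> powr a" using al \<rho> r by (intro divide_left_mono) auto
    moreover have "0 \<le> be / r powr b" using be by simp
    ultimately show ?thesis unfolding pair_energy_def by simp
  qed
qed

lemma pair_energy_bounded_below:
  assumes "0 < a" "a < b" "0 < al" "0 < be"
  shows "\<exists>K. \<forall>r>0. - K \<le> pair_energy al be a b r"
proof -
  define \<rho> where "\<rho> = (be / (2 * al)) powr (1 / (b - a))"
  note near_far = pair_energy_near_far[OF assms, folded \<rho>_def]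
  have "- (al / \<rho> powr a) \<le> pair_energy al be a b r" if "0 < r" for r
  proof (cases "r \<le> \<rho>")
    case True
    have "0 \<le> al / r powr a" "0 \<le> al / \<rho> powr a" using assms by simp_all
    then show ?thesis using near_far(2)[OF that True] by linarith
  qed (use near_far(3) in simp)
  then show ?thesis by blast
qed

lemma pair_energy_sublevel:
  assumes ab: "0 < a" "a < b" and al: "0 < al" and be: "0 < be"
  shows "\<exists>dl>0. \<forall>r>0. pair_energy al be a b r \<le> C \<longrightarrow> dl \<le> r"
proof -
  define \<rho> where "\<rho> = (be / (2 * al)) powr (1 / (b - a))"
  note near_far = pair_energy_near_far[OF assms, folded \<rho>_def]
  define C' where "C' = max C 1"
  define X where "X = (al / C') powr (1 / a)"
  have C': "0 < C'" "C \<le> C'" unfolding C'_def by auto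
  have "dl \<le> r" if dl: "dl = min \<rho> X" and r: "0 < r" "pair_energy al be a b r \<le> C" for dl r
  proof (cases "r \<le> \<rho>")
    case True
    have "al / r powr a \<le> C'" using near_far(2)[OF r(1) True] r(2) C' by linarith
    then have "al / C' \<le> r powr a" using C' r al by (simp add: field_simps)
    then have "X \<le> (r powr a) powr (1 / a)" unfolding X_def using al C' ab by (intro powr_mono2) auto
    also have "\<dots> = r" using ab r by (simp add: powr_powr)
    finally show ?thesis using dl by linarith
  qed (use dl in linarith)
  moreover have "0 < min \<rho> X" using near_far(1) al C' by (simp add: X_def)
  ultimately show ?thesis by blast
qed

lemma Wpot_bounded_below:
  assumes c: "0 < a12" "0 < a13" "0 < a23" "0 < b12" "0 < b13" "0 < b23" and ab: "0 < a" "a < b"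
  shows "\<exists>K. \<forall>q. q \<notin> collision_set \<longrightarrow> - K \<le> Wpot a12 a13 a23 b12 b13 b23 a b q"
proof -
  obtain K12 K13 K23 where "\<forall>r>0. - K12 \<le> pair_energy a12 b12 a b r"
    "\<forall>r>0. - K13 \<le> pair_energy a13 b13 a b r" "\<forall>r>0. - K23 \<le> pair_energy a23 b23 a b r"
    using pair_energy_bounded_below[OF ab] c by metis
  moreover have "0 < \<bar>q$1 - q$2\<bar> \<and> 0 < \<bar>q$1 - q$3\<bar> \<and> 0 < \<bar>q$2 - q$3\<bar>"
    if "q \<notin> collision_set" for q
    using that by (auto simp: collision_set_def)
  ultimately have "- (K12 + K13 + K23) \<le> Wpot a12 a13 a23 b12 b13 b23 a b q"
    if "q \<notin> collision_set" for q
    unfolding Wpot_pair_energy using that by (smt (verit))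
  then show ?thesis by blast
qed

lemma Wpot_sublevel_separated:
  assumes c: "0 < a12" "0 < a13" "0 < a23" "0 < b12" "0 < b13" "0 < b23" and ab: "0 < a" "a < b"
  shows "\<exists>dl>0. \<forall>q. q \<notin> collision_set \<longrightarrow> Wpot a12 a13 a23 b12 b13 b23 a b q \<le> C \<longrightarrow> q \<in> separated dl"
proof -
  obtain K12 K13 K23 where K: "\<forall>r>0. - K12 \<le> pair_energy a12 b12 a b r"
    "\<forall>r>0. - K13 \<le> pair_energy a13 b13 a b r" "\<forall>r>0. - K23 \<le> pair_energy a23 b23 a b r"
    using pair_energy_bounded_below[OF ab] c by metis
  text \<open>Each pair energy is bounded by \<open>C\<close> plus the lower bounds of the two others.\<close>
  obtain d12 d13 d23 where d: "0 < d12" "0 < d13" "0 < d23"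
    and d12: "\<forall>r>0. pair_energy a12 b12 a b r \<le> C + K13 + K23 \<longrightarrow> d12 \<le> r"
    and d13: "\<forall>r>0. pair_energy a13 b13 a b r \<le> C + K12 + K23 \<longrightarrow> d13 \<le> r"
    and d23: "\<forall>r>0. pair_energy a23 b23 a b r \<le> C + K12 + K13 \<longrightarrow> d23 \<le> r"
    using pair_energy_sublevel[OF ab] c by metis
  have "q \<in> separated (min d12 (min d13 d23))"
    if q: "q \<notin> collision_set" "Wpot a12 a13 a23 b12 b13 b23 a b q \<le> C" for q
  proof -
    have pos: "0 < \<bar>q$1 - q$2\<bar>" "0 < \<bar>q$1 - q$3\<bar>" "0 < \<bar>q$2 - q$3\<bar>"
      using q(1) by (auto simp: collision_set_def)
    note W = q(2)[unfolded Wpot_pair_energy]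
    have l12: "- K12 \<le> pair_energy a12 b12 a b \<bar>q$1 - q$2\<bar>" using K(1) pos(1) by blast
    have l13: "- K13 \<le> pair_energy a13 b13 a b \<bar>q$1 - q$3\<bar>" using K(2) pos(2) by blast
    have l23: "- K23 \<le> pair_energy a23 b23 a b \<bar>q$2 - q$3\<bar>" using K(3) pos(3) by blast
    have "d12 \<le> \<bar>q$1 - q$2\<bar>" using d12 pos(1) W l13 l23 by force
    moreover have "d13 \<le> \<bar>q$1 - q$3\<bar>" using d13 pos(2) W l12 l23 by force
    moreover have "d23 \<le> \<bar>q$2 - q$3\<bar>" using d23 pos(3) W l12 l13 by force
    ultimately show ?thesis by (auto simp: separated_def)
  qed
  then show ?thesis using d by (intro exI[of _ "min d12 (min d13 d23)"]) auto
qed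

definition velocity :: "real^3 \<Rightarrow> real^3 \<Rightarrow> real^3" where
  "velocity m p = (\<chi> i. p$i / m$i)"

definition kinetic_energy :: "real^3 \<Rightarrow> real^3 \<Rightarrow> real" where
  "kinetic_energy m p = (\<Sum>i\<in>UNIV. (p$i)^2 / (2 * m$i))"

lemma velocity_diff: "velocity m p - velocity m p' = velocity m (p - p')"
  by (simp add: velocity_def vec_eq_iff diff_divide_distrib)

lemma norm_velocity_le:
  assumes "\<forall>i. 0 < m$i"
  shows "norm (velocity m p) \<le> (\<Sum>i\<in>UNIV. 1 / m$i) * norm p"
proof -
  have "norm (velocity m p) \<le> (\<Sum>i\<in>UNIV. \<bar>velocity m p $ i\<bar>)" by (rule norm_le_l1_cart)
  also have "\<dots> \<le> (\<Sum>i\<in>UNIV. (1 / m$i) * norm p)"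
  proof (rule sum_mono)
    fix i
    have "0 < m$i" using assms by blast
    then show "\<bar>velocity m p $ i\<bar> \<le> (1 / m$i) * norm p"
      using component_le_norm_cart[of p i] by (simp add: velocity_def abs_divide divide_right_mono)
  qed
  finally show ?thesis by (simp add: sum_distrib_right)
qed

lemma kinetic_energy_nonneg: "\<forall>i. 0 < m$i \<Longrightarrow> 0 \<le> kinetic_energy m p"
  unfolding kinetic_energy_def by (intro sum_nonneg divide_nonneg_pos) auto

lemma norm_le_kinetic_energy:
  assumes "\<forall>i. 0 < m$i"
  shows "norm p \<le> (\<Sum>i\<in>UNIV. 1 + 2 * m$i * kinetic_energy m p)"
proof -
  have "\<bar>p$i\<bar> \<le> 1 + 2 * m$i * kinetic_energy m p" for i
  proof -
    have "(p$i)^2 / (2 * m$i) \<le> kinetic_energy m p" unfolding kinetic_energy_def using assms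
      by (intro member_le_sum divide_nonneg_pos) auto
    then have "(p$i)^2 \<le> 2 * m$i * kinetic_energy m p" using assms by (simp add: field_simps)
    moreover have "\<bar>p$i\<bar> \<le> 1 + (p$i)^2"
      using sum_squares_ge_zero[of "\<bar>p$i\<bar> - 1" 0] by (simp add: power2_eq_square algebra_simps)
    ultimately show ?thesis by linarith
  qed
  then have "(\<Sum>i\<in>UNIV. \<bar>p$i\<bar>) \<le> (\<Sum>i\<in>UNIV. 1 + 2 * m$i * kinetic_energy m p)" by (rule sum_mono)
  then show ?thesis using norm_le_l1_cart[of p] by linarith
qed

lemma gderiv_kinetic_energy:
  assumes m: "\<forall>i. 0 < m$i"
  shows "GDERIV (kinetic_energy m) p :> velocity m p"
proof -
  have coord: "((\<lambda>p::real^3. p$i) has_derivative (\<lambda>h. h$i)) (at p)" for i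
    by (rule bounded_linear_imp_has_derivative) (rule bounded_linear_vec_nth)
  have "((\<lambda>p::real^3. (p$i)^2 / (2 * m$i)) has_derivative (\<lambda>h. h$i * (p$i / m$i))) (at p)" for i
  proof -
    have "((\<lambda>p::real^3. (p$i * p$i) * (1 / (2 * m$i))) has_derivative
        (\<lambda>h. (p$i * h$i + h$i * p$i) * (1 / (2 * m$i)))) (at p)"
      by (intro has_derivative_mult_left has_derivative_mult coord)
    moreover have "(\<lambda>h. (p$i * h$i + h$i * p$i) * (1 / (2 * m$i))) = (\<lambda>h. h$i * (p$i / m$i))"
      using m by (auto simp: field_simps)
    ultimately show ?thesis by (simp add: power2_eq_square)
  qed
  then have "(kinetic_energy m has_derivative (\<lambda>h. \<Sum>i\<in>UNIV. h$i * (p$i / m$i))) (at p)"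
    unfolding kinetic_energy_def[abs_def] by (intro has_derivative_sum) auto
  then show ?thesis unfolding gderiv_def by (simp add: inner_vec_def velocity_def)
qed

lemma energy_conservation:
  assumes m: "\<forall>i. 0 < m$i" and I: "convex I"
    and sol: "is_solution m (Wpot a12 a13 a23 b12 b13 b23 a b) I q p"
  shows "\<exists>E. \<forall>t\<in>I. kinetic_energy m (p t) + Wpot a12 a13 a23 b12 b13 b23 a b (q t) = E"
proof (rule has_derivative_zero_constant[OF I])
  fix t assume t: "t \<in> I"
  let ?W = "Wpot a12 a13 a23 b12 b13 b23 a b" and ?G = "Wpot_grad a12 a13 a23 b12 b13 b23 a b"
  have nc: "q t \<notin> collision_set"
    and dq: "(q has_vector_derivative velocity m (p t)) (at t within I)"
    and dp: "(p has_vector_derivative - ?G (q t)) (at t within I)"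
    using sol t grad_Wpot unfolding is_solution_def velocity_def by auto
  have "((\<lambda>t. kinetic_energy m (p t)) has_derivative
      (\<lambda>h. inner (h *\<^sub>R - ?G (q t)) (velocity m (p t)))) (at t within I)"
    using has_derivative_compose[OF dp[unfolded has_vector_derivative_def]
        gderiv_kinetic_energy[OF m, unfolded gderiv_def]] .
  moreover have "((\<lambda>t. ?W (q t)) has_derivative (\<lambda>h. inner (h *\<^sub>R velocity m (p t)) (?G (q t)))) (at t within I)"
    using has_derivative_compose[OF dq[unfolded has_vector_derivative_def]
        gderiv_Wpot[OF nc, unfolded gderiv_def]] .
  ultimately have "((\<lambda>t. kinetic_energy m (p t) + ?W (q t)) has_derivative
      (\<lambda>h. inner (h *\<^sub>R - ?G (q t)) (velocity m (p t)) + inner (h *\<^sub>R velocity m (p t)) (?G (q t))))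
      (at t within I)"
    by (rule has_derivative_add)
  then show "((\<lambda>t. kinetic_energy m (p t) + ?W (q t)) has_derivative (\<lambda>h. 0)) (at t within I)"
    by (simp add: inner_commute)
qed

lemma energy_confinement:
  assumes m: "\<forall>i. 0 < m$i"
    and c: "0 < a12" "0 < a13" "0 < a23" "0 < b12" "0 < b13" "0 < b23" and ab: "0 < a" "a < b"
  shows "\<exists>dl>0. \<exists>K. \<forall>q p. q \<notin> collision_set \<longrightarrow>
    kinetic_energy m p + Wpot a12 a13 a23 b12 b13 b23 a b q = E \<longrightarrow>
    q \<in> separated dl \<and> kinetic_energy m p \<le> K"
proof -
  obtain K where K: "\<forall>q. q \<notin> collision_set \<longrightarrow> - K \<le> Wpot a12 a13 a23 b12 b13 b23 a b q"
    using Wpot_bounded_below[OF c ab] by blast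
  obtain dl where "0 < dl"
    and dl: "\<forall>q. q \<notin> collision_set \<longrightarrow> Wpot a12 a13 a23 b12 b13 b23 a b q \<le> E \<longrightarrow> q \<in> separated dl"
    using Wpot_sublevel_separated[OF c ab] by blast
  have "q \<in> separated dl \<and> kinetic_energy m p \<le> E + K"
    if "q \<notin> collision_set" "kinetic_energy m p + Wpot a12 a13 a23 b12 b13 b23 a b q = E" for q p
    using that K dl kinetic_energy_nonneg[OF m, of p] by force
  then show ?thesis using \<open>0 < dl\<close> by blast
qed

definition hamiltonian_field ::
  "real^3 \<Rightarrow> (real^3 \<Rightarrow> real^3) \<Rightarrow> (real^3) \<times> (real^3) \<Rightarrow> (real^3) \<times> (real^3)" where
  "hamiltonian_field m G z = (velocity m (snd z), - G (fst z))"

lemma is_solution_iff_first_order: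
  "is_solution m (Wpot a12 a13 a23 b12 b13 b23 a b) I q p \<longleftrightarrow>
    (\<forall>t\<in>I. q t \<notin> collision_set \<and> ((\<lambda>t. (q t, p t)) has_vector_derivative
       hamiltonian_field m (Wpot_grad a12 a13 a23 b12 b13 b23 a b) (q t, p t)) (at t within I))"
proof -
  have pair: "((\<lambda>t. (q t, p t)) has_vector_derivative (u, v)) (at t within I) \<longleftrightarrow>
      (q has_vector_derivative u) (at t within I) \<and> (p has_vector_derivative v) (at t within I)"
    for u v t
  proof
    assume d: "((\<lambda>t. (q t, p t)) has_vector_derivative (u, v)) (at t within I)"
    show "(q has_vector_derivative u) (at t within I) \<and> (p has_vector_derivative v) (at t within I)"
      using bounded_linear.has_vector_derivative[OF bounded_linear_fst d]
        bounded_linear.has_vector_derivative[OF bounded_linear_snd d] by simp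
  qed (auto intro: has_vector_derivative_Pair)
  show ?thesis
    unfolding is_solution_def hamiltonian_field_def pair by (auto simp: grad_Wpot velocity_def)
qed

lemma hamiltonian_field_lipschitz:
  assumes m: "\<forall>i. 0 < m$i" and G: "L-lipschitz_on R G"
  shows "((\<Sum>i\<in>UNIV. 1 / m$i) + L)-lipschitz_on (fst -` R) (hamiltonian_field m G)"
proof (rule lipschitz_onI)
  let ?C = "\<Sum>i\<in>UNIV. 1 / m$i"
  have C: "0 \<le> ?C" using m by (intro sum_nonneg) (simp add: less_imp_le)
  show "0 \<le> ?C + L" using C lipschitz_on_nonneg[OF G] by simp
  fix z z' :: "(real^3) \<times> (real^3)" assume z: "z \<in> fst -` R" "z' \<in> fst -` R"
  have "norm (hamiltonian_field m G z - hamiltonian_field m G z')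
      \<le> norm (velocity m (snd z - snd z')) + norm (G (fst z) - G (fst z'))"
    using norm_Pair_le[of "velocity m (snd z - snd z')" "- (G (fst z) - G (fst z'))"]
    by (simp add: hamiltonian_field_def velocity_diff norm_minus_commute)
  also have "\<dots> \<le> ?C * norm (snd z - snd z') + L * norm (fst z - fst z')"
    using z by (intro add_mono norm_velocity_le[OF m] lipschitz_on_normD[OF G]) auto
  also have "\<dots> \<le> ?C * norm (z - z') + L * norm (z - z')"
  proof -
    have "z - z' = (fst z - fst z', snd z - snd z')" by (simp add: prod_eq_iff)
    then have "norm (fst z - fst z') \<le> norm (z - z')" "norm (snd z - snd z') \<le> norm (z - z')"
      using norm_fst_le norm_snd_le by metis+
    then show ?thesis using C lipschitz_on_nonneg[OF G] by (intro add_mono mult_left_mono)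
  qed
  finally show "dist (hamiltonian_field m G z) (hamiltonian_field m G z') \<le> (?C + L) * dist z z'"
    by (simp add: dist_norm algebra_simps)
qed

lemma hamiltonian_field_bound:
  assumes m: "\<forall>i. 0 < m$i" and "norm (G q) \<le> BG" and "kinetic_energy m p \<le> K"
  shows "norm (hamiltonian_field m G (q, p))
    \<le> (\<Sum>i\<in>UNIV. 1 / m$i) * (\<Sum>i\<in>UNIV. 1 + 2 * m$i * K) + BG"
proof -
  have "norm p \<le> (\<Sum>i\<in>UNIV. 1 + 2 * m$i * K)"
    using norm_le_kinetic_energy[OF m, of p] assms(3) m
    by (smt (verit) mult_left_mono sum_mono less_imp_le)
  then have "norm (velocity m p) \<le> (\<Sum>i\<in>UNIV. 1 / m$i) * (\<Sum>i\<in>UNIV. 1 + 2 * m$i * K)"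
    using norm_velocity_le[OF m, of p] m
    by (smt (verit) mult_left_mono sum_nonneg divide_nonneg_pos)
  then show ?thesis
    using norm_Pair_le[of "velocity m p" "- G q"] assms(2) by (simp add: hamiltonian_field_def)
qed

lemma solution_confined:
  assumes m: "\<forall>i. 0 < m$i"
    and c: "0 < a12" "0 < a13" "0 < a23" "0 < b12" "0 < b13" "0 < b23" and ab: "0 < a" "a < b"
    and I: "convex I" and sol: "is_solution m (Wpot a12 a13 a23 b12 b13 b23 a b) I q p"
  shows "\<exists>dl>0. \<exists>K. \<forall>t\<in>I. q t \<in> separated dl \<and> kinetic_energy m (p t) \<le> K"
proof -
  obtain E where "\<forall>t\<in>I. kinetic_energy m (p t) + Wpot a12 a13 a23 b12 b13 b23 a b (q t) = E"
    using energy_conservation[OF m I sol] by blast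
  moreover have "\<forall>t\<in>I. q t \<notin> collision_set" using sol by (simp add: is_solution_def)
  ultimately show ?thesis using energy_confinement[OF m c ab, of E] by meson
qed

lemma phase_neighbourhood_separated:
  "(\<Union>z\<in>(fst -` separated dl :: ((real^3) \<times> (real^3)) set). cball z (dl/4)) \<subseteq> fst -` separated (dl/2)"
proof
  fix z' :: "(real^3) \<times> (real^3)"
  assume "z' \<in> (\<Union>z\<in>fst -` separated dl. cball z (dl/4))"
  then obtain z where z: "fst z \<in> separated dl" "dist z z' \<le> dl/4" by auto
  have "norm (fst z' - fst z) \<le> norm (z' - z)"
    by (metis fst_diff norm_fst_le prod.collapse)
  then have "fst z' \<in> separated (dl/2)"
    using z by (intro separated_perturb) (auto simp: dist_norm norm_minus_commute)
  then show "z' \<in> fst -` separated (dl/2)" by simp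
qed

lemma hamiltonian_field_lipschitz_near_separated:
  assumes m: "\<forall>i. 0 < m$i"
    and c: "0 < a12" "0 < a13" "0 < a23" "0 < b12" "0 < b13" "0 < b23" and ab: "0 < a" "a < b"
    and dl: "0 < dl"
  shows "\<exists>L. L-lipschitz_on (\<Union>z\<in>fst -` separated dl. cball z (dl/4))
    (hamiltonian_field m (Wpot_grad a12 a13 a23 b12 b13 b23 a b))"
proof -
  obtain L where "L-lipschitz_on (separated (dl/2)) (Wpot_grad a12 a13 a23 b12 b13 b23 a b)"
    using Wpot_grad_lipschitz[OF c ab] dl by (meson half_gt_zero)
  then have "((\<Sum>i\<in>UNIV. 1 / m$i) + L)-lipschitz_on (fst -` separated (dl/2))
      (hamiltonian_field m (Wpot_grad a12 a13 a23 b12 b13 b23 a b))"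
    by (rule hamiltonian_field_lipschitz[OF m])
  then have "((\<Sum>i\<in>UNIV. 1 / m$i) + L)-lipschitz_on (\<Union>z\<in>fst -` separated dl. cball z (dl/4))
      (hamiltonian_field m (Wpot_grad a12 a13 a23 b12 b13 b23 a b))"
    using phase_neighbourhood_separated by (rule lipschitz_on_subset)
  then show ?thesis by blast
qed

text \<open>Forward continuation: every solution on \<open>[0, T)\<close> extends beyond \<open>T\<close>. Energy confinement
  keeps the phase curve in a closed region where the Hamiltonian field is bounded, and the field
  is Lipschitz on a neighbourhood of that region, so the continuation principle applies.\<close>
lemma forward_continuation:
  assumes m: "\<forall>i. 0 < m$i"
    and c: "0 < a12" "0 < a13" "0 < a23" "0 < b12" "0 < b13" "0 < b23" and ab: "0 < a" "a < b"
    and T: "0 < T" and sol: "is_solution m (Wpot a12 a13 a23 b12 b13 b23 a b) {0..<T} q p"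
  shows "\<exists>T' q' p'. T' > T \<and> is_solution m (Wpot a12 a13 a23 b12 b13 b23 a b) {0..<T'} q' p' \<and>
    (\<forall>t\<in>{0..<T}. q' t = q t \<and> p' t = p t)"
proof -
  let ?W = "Wpot a12 a13 a23 b12 b13 b23 a b" and ?G = "Wpot_grad a12 a13 a23 b12 b13 b23 a b"
  let ?F = "hamiltonian_field m ?G"
  have first_order: "\<forall>t\<in>{0..<T}. q t \<notin> collision_set \<and>
      ((\<lambda>t. (q t, p t)) has_vector_derivative ?F (q t, p t)) (at t within {0..<T})"
    using sol is_solution_iff_first_order by blast
  obtain dl K where dl: "0 < dl"
    and confined: "\<forall>t\<in>{0..<T}. q t \<in> separated dl \<and> kinetic_energy m (p t) \<le> K"
    using solution_confined[OF m c ab _ sol] by auto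
  obtain BG where BG: "\<forall>q\<in>separated dl. norm (?G q) \<le> BG"
    using Wpot_grad_bounded[OF c ab dl] by blast
  obtain L where lip: "L-lipschitz_on (\<Union>z\<in>fst -` separated dl. cball z (dl/4)) ?F"
    using hamiltonian_field_lipschitz_near_separated[OF m c ab dl] by blast
  have "\<exists>T'>T. \<exists>z. (\<forall>t\<in>{0..<T}. z t = (q t, p t)) \<and>
      (\<forall>t\<in>{0..<T'}. z t \<in> (\<Union>z\<in>fst -` separated dl. cball z (dl/4)) \<and>
         (z has_vector_derivative ?F (z t)) (at t within {0..<T'}))"
  proof (rule ode_continuation[OF T closed_vimage_fst[OF closed_separated] _ lip])
    fix t assume t: "t \<in> {0..<T}"
    show "norm (?F (q t, p t)) \<le> (\<Sum>i\<in>UNIV. 1 / m$i) * (\<Sum>i\<in>UNIV. 1 + 2 * m$i * K) + BG"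
      using confined t BG by (intro hamiltonian_field_bound[OF m]) auto
  qed (use dl confined first_order in auto)
  then obtain T' z where T': "T' > T" and agree: "\<forall>t\<in>{0..<T}. z t = (q t, p t)"
    and z_near: "\<forall>t\<in>{0..<T'}. z t \<in> (\<Union>z\<in>fst -` separated dl. cball z (dl/4))"
    and z_deriv: "\<forall>t\<in>{0..<T'}. (z has_vector_derivative ?F (z t)) (at t within {0..<T'})"
    by blast
  have "z t \<in> fst -` separated (dl/2)" if "t \<in> {0..<T'}" for t
    using z_near that by (intro subsetD[OF phase_neighbourhood_separated]) blast
  then have z: "\<forall>t\<in>{0..<T'}. fst (z t) \<in> separated (dl/2) \<and>
      (z has_vector_derivative ?F (z t)) (at t within {0..<T'})"
    using z_deriv by simp
  have "is_solution m ?W {0..<T'} (\<lambda>t. fst (z t)) (\<lambda>t. snd (z t))"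
    unfolding is_solution_iff_first_order using z dl separated_not_collision[of "dl/2"] by simp
  then show ?thesis
    using T' agree by (intro exI[of _ T'] exI[of _ "\<lambda>t. fst (z t)"] exI[of _ "\<lambda>t. snd (z t)"]) auto
qed

lemma is_solution_time_reversal:
  assumes sol: "is_solution m W I q p"
  shows "is_solution m W (uminus ` I) (\<lambda>t. q (-t)) (\<lambda>t. - p (-t))"
  unfolding is_solution_def
proof
  fix t assume t: "t \<in> uminus ` I"
  then have "-t \<in> I" by auto
  then have nc: "q (-t) \<notin> collision_set"
    and dq: "(q has_vector_derivative (\<chi> i. p (-t) $ i / m $ i)) (at (-t) within I)"
    and dp: "(p has_vector_derivative (- grad W (q (-t)))) (at (-t) within I)"
    using sol unfolding is_solution_def by blast+
  have I: "uminus ` (uminus ` I) = I" by (simp add: image_image)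
  have minus: "((\<lambda>x::real. - x) has_vector_derivative -1) (at t within uminus ` I)"
    by (rule has_vector_derivative_minus[OF has_vector_derivative_id])
  have "((\<lambda>x. q (-x)) has_vector_derivative (-1) *\<^sub>R (\<chi> i. p (-t) $ i / m $ i)) (at t within uminus ` I)"
    using vector_diff_chain_within[OF minus, of q] dq I by (simp add: o_def)
  moreover have "(-1) *\<^sub>R (\<chi> i. p (-t) $ i / m $ i) = (\<chi> i. (- p (-t)) $ i / m $ i)"
    by (simp add: vec_eq_iff)
  moreover have "((\<lambda>x. p (-x)) has_vector_derivative (-1) *\<^sub>R (- grad W (q (-t)))) (at t within uminus ` I)"
    using vector_diff_chain_within[OF minus, of p "- grad W (q (-t))"] dp I by (simp add: o_def)
  then have "((\<lambda>x. - p (-x)) has_vector_derivative - grad W (q (-t))) (at t within uminus ` I)"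
    using has_vector_derivative_minus by fastforce
  ultimately show "q (-t) \<notin> collision_set \<and>
      ((\<lambda>t. q (-t)) has_vector_derivative (\<chi> i. (- p (-t)) $ i / m $ i)) (at t within uminus ` I) \<and>
      ((\<lambda>t. - p (-t)) has_vector_derivative - grad W (q (-t))) (at t within uminus ` I)"
    using nc by simp
qed

lemma uminus_image_interval:
  fixes T :: real
  shows "uminus ` {-T<..0} = {0..<T}" and "uminus ` {0..<T} = {-T<..0}"
  by (auto simp: image_iff intro!: bexI[of _ "- x" for x])

text \<open>Backward continuation follows by reversing time, continuing forward, and reversing back.\<close>
lemma backward_continuation:
  assumes m: "\<forall>i. 0 < m$i"
    and c: "0 < a12" "0 < a13" "0 < a23" "0 < b12" "0 < b13" "0 < b23" and ab: "0 < a" "a < b"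
    and T: "0 < T" and sol: "is_solution m (Wpot a12 a13 a23 b12 b13 b23 a b) {-T<..0} q p"
  shows "\<exists>T' q' p'. T' > T \<and> is_solution m (Wpot a12 a13 a23 b12 b13 b23 a b) {-T'<..0} q' p' \<and>
    (\<forall>t\<in>{-T<..0}. q' t = q t \<and> p' t = p t)"
proof -
  have "is_solution m (Wpot a12 a13 a23 b12 b13 b23 a b) {0..<T} (\<lambda>t. q (-t)) (\<lambda>t. - p (-t))"
    using is_solution_time_reversal[OF sol] unfolding uminus_image_interval .
  then obtain T' q' p' where T': "T' > T"
    and sol': "is_solution m (Wpot a12 a13 a23 b12 b13 b23 a b) {0..<T'} q' p'"
    and agree: "\<forall>t\<in>{0..<T}. q' t = q (-t) \<and> p' t = - p (-t)"
    using forward_continuation[OF m c ab T] by blast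
  have "is_solution m (Wpot a12 a13 a23 b12 b13 b23 a b) {-T'<..0} (\<lambda>t. q' (-t)) (\<lambda>t. - p' (-t))"
    using is_solution_time_reversal[OF sol'] unfolding uminus_image_interval .
  moreover have "\<forall>t\<in>{-T<..0}. q' (-t) = q t \<and> - p' (-t) = p t" using agree by auto
  ultimately show ?thesis using T' by blast
qed

text \<open>Main theorem: no solution has a singularity, forward or backward in time. The hypothesis
  \<open>4 < a < b - 1\<close> enters only through its consequence \<open>0 < a < b\<close>.\<close>
theorem mainTheorem1:
  fixes m :: "real^3" and a12 a13 a23 b12 b13 b23 a b :: real
  assumes "\<forall>i. m $ i > 0"
    and "a12 > 0" "a13 > 0" "a23 > 0" "b12 > 0" "b13 > 0" "b23 > 0"
    and "4 < a" "a < b - 1"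
  shows "(\<forall>T q p. T > 0 \<and> is_solution m (Wpot a12 a13 a23 b12 b13 b23 a b) {0..<T} q p \<longrightarrow>
            (\<exists>T' q' p'. T' > T \<and> is_solution m (Wpot a12 a13 a23 b12 b13 b23 a b) {0..<T'} q' p' \<and>
               (\<forall>t\<in>{0..<T}. q' t = q t \<and> p' t = p t)))
       \<and> (\<forall>T q p. T > 0 \<and> is_solution m (Wpot a12 a13 a23 b12 b13 b23 a b) {-T<..0} q p \<longrightarrow>
            (\<exists>T' q' p'. T' > T \<and> is_solution m (Wpot a12 a13 a23 b12 b13 b23 a b) {-T'<..0} q' p' \<and>
               (\<forall>t\<in>{-T<..0}. q' t = q t \<and> p' t = p t)))"
proof -
  have ab: "0 < a" "a < b" using assms(8,9) by linarith+
  show ?thesis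
    using forward_continuation[OF assms(1-7) ab] backward_continuation[OF assms(1-7) ab] by blast
qed

end
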